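(* Let $1<\alpha<2$, $b>0$, $M\ge2$ an integer, $h=b/M$. Let $g_k^\alpha=(-1)^k\binom{\alpha}{k}$, $w_0^\alpha=\frac{\alpha}{2}g_0^\alpha$, $w_k^\alpha=\frac{\alpha}{2}g_k^\alpha+\frac{2-\alpha}{2}g_{k-1}^\alpha$ for $k\ge1$. Let $B_\alpha$ be the $(M-1)\times(M-1)$ matrix with entries $(B_\alpha)_{ij}=w^\alpha_{j-i+1}$ if $j\ge i-1$ and $(B_\alpha)_{ij}=0$ if $j<i-1$, and $A_\alpha=B_\alpha+B_\alpha^T$. For $u,v\in\mathbb{C}^{M-1}$ let $(u,v)=h\sum_{i=1}^{M-1}u_i\overline{v_i}$ and $\|u\|=(u,u)^{1/2}$. Then for every $u\in\mathbb{C}^{M-1}$, $$-\frac{1}{h^\alpha}(A_\alpha u,u)\ge-\frac{2}{b^\alpha\Gamma(1-\alpha)}\|u\|^2,$$ and the right-hand side is $>0$ for $u\neq0$. *)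

theory Defs
  imports "HOL-Analysis.Analysis"
begin

definition gcoef :: "real \<Rightarrow> nat \<Rightarrow> real" where
  "gcoef \<alpha> k = (-1) ^ k * (\<alpha> gchoose k)"

fun wcoef :: "real \<Rightarrow> nat \<Rightarrow> real" where
  "wcoef \<alpha> 0 = \<alpha> / 2 * gcoef \<alpha> 0"
| "wcoef \<alpha> (Suc k) = \<alpha> / 2 * gcoef \<alpha> (Suc k) + (2 - \<alpha>) / 2 * gcoef \<alpha> k"

definition Bmat :: "real \<Rightarrow> nat \<Rightarrow> nat \<Rightarrow> real" where
  "Bmat \<alpha> i j = (if j + 1 \<ge> i then wcoef \<alpha> (j + 1 - i) else 0)"

definition Amat :: "real \<Rightarrow> nat \<Rightarrow> nat \<Rightarrow> real" where
  "Amat \<alpha> i j = Bmat \<alpha> i j + Bmat \<alpha> j i"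

definition matvec :: "nat \<Rightarrow> (nat \<Rightarrow> nat \<Rightarrow> real) \<Rightarrow> (nat \<Rightarrow> complex) \<Rightarrow> nat \<Rightarrow> complex" where
  "matvec M C u = (\<lambda>i. \<Sum>j=1..M-1. complex_of_real (C i j) * u j)"

definition ip_h :: "real \<Rightarrow> nat \<Rightarrow> (nat \<Rightarrow> complex) \<Rightarrow> (nat \<Rightarrow> complex) \<Rightarrow> complex" where
  "ip_h h M u v = complex_of_real h * (\<Sum>i=1..M-1. u i * cnj (v i))"

definition norm_h :: "real \<Rightarrow> nat \<Rightarrow> (nat \<Rightarrow> complex) \<Rightarrow> real" where
  "norm_h h M u = sqrt (Re (ip_h h M u u))"

end

theory Submission
  imports Defs
begin

text \<open>
  The form \<open>(A\<^sub>\<alpha> u, u)\<close> is real and, since \<open>A\<^sub>\<alpha>\<close> is symmetric with nonnegative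
  off-diagonal entries, \<open>|u\<^sub>i u\<^sub>j| \<le> (|u\<^sub>i|\<^sup>2 + |u\<^sub>j|\<^sup>2)/2\<close> bounds it by the largest row sum
  times \<open>\<Sum>|u\<^sub>i|\<^sup>2\<close>. Every row sum of \<open>A\<^sub>\<alpha>\<close> is a sum of two partial sums \<open>\<Sum>\<^sub>k\<^sub>\<le>\<^sub>m w\<^sub>k\<close>
  (or \<open>w\<^sub>1\<close>), and for \<open>m \<ge> 2\<close> such a partial sum is at most \<open>\<Sum>\<^sub>k\<^sub>\<le>\<^sub>m g\<^sub>k = (-1)\<^sup>m (\<alpha>-1 choose m)\<close>.
  The sequence \<open>(n+1)\<^sup>\<alpha> (-1)\<^sup>n (\<alpha>-1 choose n)\<close> increases to \<open>1/\<Gamma>(1-\<alpha>)\<close>, which gives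
  the bound \<open>(m+1)\<^sup>-\<^sup>\<alpha>/\<Gamma>(1-\<alpha>) \<le> M\<^sup>-\<^sup>\<alpha>/\<Gamma>(1-\<alpha>) < 0\<close> on every partial sum that occurs.
\<close>

lemma Gamma_neg_of_neg_one_lt:
  fixes z :: real
  assumes "-1 < z" "z < 0"
  shows "Gamma z < 0"
proof -
  have "z \<notin> \<int>\<^sub>\<le>\<^sub>0"
  proof
    assume "z \<in> \<int>\<^sub>\<le>\<^sub>0"
    then obtain n where "z = of_int n" "n \<le> 0" by (auto elim: nonpos_Ints_cases)
    with assms show False by auto
  qed
  then have "Gamma (z + 1) = z * Gamma z" by (rule Gamma_plus1)
  moreover have "Gamma (z + 1) > 0" using assms by (intro Gamma_real_pos) auto
  ultimately show ?thesis using assms by (simp add: zero_less_mult_iff)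
qed

lemma diff_mult_powr_add_one_le:
  fixes a y :: real
  assumes "0 \<le> a" "0 < y"
  shows "(y - a) * (y + 1) powr a \<le> y * y powr a"
proof -
  define x where "x = 1 / y"
  have x: "x > 0" "y + 1 = y * (1 + x)" using assms by (auto simp: x_def field_simps)
  have "(1 + x) powr a = exp (a * ln (1 + x))" using x by (simp add: powr_def)
  also have "\<dots> \<le> exp (a * x)"
    using x assms by (intro exp_le_cancel_iff[THEN iffD2] mult_left_mono ln_add_one_self_le_self) auto
  finally have upper: "(1 + x) powr a \<le> exp (a * x)" .
  have "(1 - a * x) * (1 + x) powr a \<le> exp (- (a * x)) * (1 + x) powr a"
    using exp_ge_add_one_self[of "- (a * x)"] by (intro mult_right_mono) auto
  also have "\<dots> \<le> exp (- (a * x)) * exp (a * x)" using upper by (intro mult_left_mono) auto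
  finally have key: "(1 - a * x) * (1 + x) powr a \<le> 1" by (simp add: exp_minus)
  have "(y + 1) powr a = y powr a * (1 + x) powr a"
    unfolding x(2) using assms x by (simp add: powr_mult)
  then have "(y - a) * (y + 1) powr a = y * y powr a * ((1 - a * x) * (1 + x) powr a)"
    using assms by (simp add: x_def field_simps)
  also have "\<dots> \<le> y * y powr a" using key assms by (simp add: mult_left_le)
  finally show ?thesis .
qed

lemma gcoef_eq_pochhammer: "gcoef \<alpha> k = pochhammer (-\<alpha>) k / fact k"
  by (simp add: gcoef_def gbinomial_pochhammer power_mult_distrib[symmetric])

lemma gcoef_0 [simp]: "gcoef \<alpha> 0 = 1"
  by (simp add: gcoef_def)

lemma gcoef_Suc: "gcoef \<alpha> (Suc k) = gcoef \<alpha> k * (real k - \<alpha>) / (real k + 1)"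
  by (simp add: gcoef_eq_pochhammer pochhammer_Suc field_simps)

lemma sum_gcoef_atMost: "(\<Sum>k\<le>n. gcoef \<alpha> k) = gcoef (\<alpha> - 1) n"
proof (induction n)
  case (Suc n)
  have "gcoef \<alpha> (Suc n) = gcoef (\<alpha> - 1) (Suc n) - gcoef (\<alpha> - 1) n"
    using gbinomial_Suc_Suc[of "\<alpha> - 1" n] by (simp add: gcoef_def algebra_simps)
  with Suc show ?case by simp
qed simp

lemma sum_wcoef_atMost:
  "(\<Sum>k\<le>Suc m. wcoef \<alpha> k) = \<alpha> / 2 * gcoef (\<alpha> - 1) (Suc m) + (2 - \<alpha>) / 2 * gcoef (\<alpha> - 1) m"
proof -
  have "(\<Sum>k\<le>Suc m. wcoef \<alpha> k)
      = \<alpha> / 2 * (gcoef \<alpha> 0 + (\<Sum>k\<le>m. gcoef \<alpha> (Suc k))) + (2 - \<alpha>) / 2 * (\<Sum>k\<le>m. gcoef \<alpha> k)"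
    by (simp add: sum.atMost_Suc_shift sum.distrib sum_distrib_left distrib_left del: sum.atMost_Suc)
  also have "gcoef \<alpha> 0 + (\<Sum>k\<le>m. gcoef \<alpha> (Suc k)) = gcoef (\<alpha> - 1) (Suc m)"
    using sum_gcoef_atMost[of \<alpha> "Suc m"] by (simp only: sum.atMost_Suc_shift)
  finally show ?thesis by (simp only: sum_gcoef_atMost)
qed

lemma gcoef_minus_one_neg:
  assumes "1 < \<alpha>" "\<alpha> < 2" "1 \<le> n"
  shows "gcoef (\<alpha> - 1) n < 0"
  using assms(3)
proof (induction n rule: dec_induct)
  case base
  then show ?case using assms by (simp add: gcoef_def)
next
  case (step n)
  then show ?case using assms by (simp add: gcoef_Suc mult_neg_pos divide_neg_pos)
qed

lemma gcoef_minus_one_mono: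
  assumes "1 < \<alpha>" "\<alpha> < 2" "1 \<le> n"
  shows "gcoef (\<alpha> - 1) n \<le> gcoef (\<alpha> - 1) (Suc n)"
proof -
  have "gcoef (\<alpha> - 1) n * 1 \<le> gcoef (\<alpha> - 1) n * ((real n + 1 - \<alpha>) / (real n + 1))"
    using gcoef_minus_one_neg[OF assms] assms by (intro mult_left_mono_neg) auto
  then show ?thesis by (simp add: gcoef_Suc algebra_simps)
qed

lemma gcoef_pos:
  assumes "1 < \<alpha>" "\<alpha> < 2" "2 \<le> k"
  shows "gcoef \<alpha> k > 0"
  using assms(3)
proof (induction k rule: dec_induct)
  case base
  then show ?case using assms by (simp add: gcoef_def numeral_2_eq_2 gbinomial_Suc)
next
  case (step k)
  then show ?case using assms by (simp add: gcoef_Suc)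
qed

text \<open>Euler's product for \<open>1/\<Gamma>\<close> in the form \<open>pochhammer z n / n! \<sim> n\<^sup>z\<^sup>-\<^sup>1/\<Gamma>(z)\<close>.\<close>

lemma gcoef_minus_one_scaled_tendsto:
  "(\<lambda>n. gcoef (\<alpha> - 1) n * (real n + 1) powr \<alpha>) \<longlonglongrightarrow> rGamma (1 - \<alpha>)"
proof -
  define z where "z = 1 - \<alpha>"
  define c where "c n = 1 / (1 + z * inverse (real n)) * (1 + inverse (real n)) powr \<alpha>" for n
  have "(\<lambda>n. rGamma_series z n * c n) \<longlonglongrightarrow> rGamma z * (1 / (1 + z * 0) * (1 + 0) powr \<alpha>)"
    unfolding c_def by (intro tendsto_intros lim_inverse_n) auto
  then have lim: "(\<lambda>n. rGamma_series z n * c n) \<longlonglongrightarrow> rGamma z" by simp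
  have "rGamma_series z n * c n = gcoef (\<alpha> - 1) n * (real n + 1) powr \<alpha>" if "real n > \<bar>\<alpha>\<bar>" for n
  proof -
    have n: "real n > 0" "real n + z > 0" using that by (auto simp: z_def)
    have "exp (z * ln (real n)) = real n powr z" using n by (simp add: powr_def)
    then have e: "exp (z * ln (real n)) = real n / real n powr \<alpha>" using n by (simp add: z_def powr_diff)
    have p: "(1 + inverse (real n)) powr \<alpha> = (real n + 1) powr \<alpha> / real n powr \<alpha>"
      using n by (simp add: powr_divide [symmetric] field_simps)
    have q: "1 + z * inverse (real n) = (real n + z) / real n"
      using n by (simp add: field_simps)
    have g: "gcoef (\<alpha> - 1) n = pochhammer z n / fact n"
      by (simp add: gcoef_eq_pochhammer z_def)
    show ?thesis unfolding g c_def rGamma_series_def p q using n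
      by (simp add: e pochhammer_Suc divide_simps)
  qed
  moreover have "\<forall>\<^sub>F n in sequentially. real n > \<bar>\<alpha>\<bar>"
    using filterlim_real_sequentially by (simp add: filterlim_at_top_dense)
  ultimately have "\<forall>\<^sub>F n in sequentially. rGamma_series z n * c n = gcoef (\<alpha> - 1) n * (real n + 1) powr \<alpha>"
    by (auto elim: eventually_mono)
  with lim show ?thesis unfolding z_def by (rule Lim_transform_eventually)
qed

lemma gcoef_minus_one_scaled_mono:
  assumes "1 < \<alpha>" "\<alpha> < 2" "1 \<le> n"
  shows "gcoef (\<alpha> - 1) n * (real n + 1) powr \<alpha> \<le> gcoef (\<alpha> - 1) (Suc n) * (real (Suc n) + 1) powr \<alpha>"
proof -
  have neg: "gcoef (\<alpha> - 1) n / (real n + 1) < 0"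
    using gcoef_minus_one_neg[OF assms] by (simp add: divide_neg_pos)
  have "gcoef (\<alpha> - 1) n * (real n + 1) powr \<alpha> = gcoef (\<alpha> - 1) n / (real n + 1) * ((real n + 1) * (real n + 1) powr \<alpha>)"
    by simp
  also have "\<dots> \<le> gcoef (\<alpha> - 1) n / (real n + 1) * ((real n + 1 - \<alpha>) * (real n + 1 + 1) powr \<alpha>)"
    using neg assms diff_mult_powr_add_one_le[of \<alpha> "real n + 1"]
    by (intro mult_left_mono_neg) (auto simp: algebra_simps)
  also have "\<dots> = gcoef (\<alpha> - 1) (Suc n) * (real (Suc n) + 1) powr \<alpha>"
    by (simp add: gcoef_Suc field_simps)
  finally show ?thesis .
qed

lemma gcoef_minus_one_le:
  assumes "1 < \<alpha>" "\<alpha> < 2" "1 \<le> n"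
  shows "gcoef (\<alpha> - 1) n \<le> (real n + 1) powr (-\<alpha>) / Gamma (1 - \<alpha>)"
proof -
  define s where "s k = gcoef (\<alpha> - 1) (Suc k) * (real (Suc k) + 1) powr \<alpha>" for k
  have "incseq s"
    unfolding s_def using assms by (intro incseq_SucI gcoef_minus_one_scaled_mono) auto
  moreover have "s \<longlonglongrightarrow> rGamma (1 - \<alpha>)"
    unfolding s_def by (rule LIMSEQ_Suc[OF gcoef_minus_one_scaled_tendsto])
  ultimately have "s (n - 1) \<le> rGamma (1 - \<alpha>)" by (rule incseq_le)
  then have "gcoef (\<alpha> - 1) n * (real n + 1) powr \<alpha> \<le> 1 / Gamma (1 - \<alpha>)"
    using assms(3) by (simp add: s_def Gamma_def inverse_eq_divide)
  moreover have "0 < (real n + 1) powr \<alpha>" by simp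
  ultimately have "gcoef (\<alpha> - 1) n \<le> 1 / Gamma (1 - \<alpha>) / (real n + 1) powr \<alpha>"
    by (simp only: pos_le_divide_eq)
  then show ?thesis by (simp add: powr_minus divide_inverse mult.commute)
qed

lemma gcoef_minus_one_le_of_less:
  assumes "1 < \<alpha>" "\<alpha> < 2" "1 \<le> n" "n < M"
  shows "gcoef (\<alpha> - 1) n \<le> real M powr (-\<alpha>) / Gamma (1 - \<alpha>)"
proof -
  have "(real n + 1) powr (-\<alpha>) / Gamma (1 - \<alpha>) \<le> real M powr (-\<alpha>) / Gamma (1 - \<alpha>)"
    using Gamma_neg_of_neg_one_lt[of "1 - \<alpha>"] assms by (intro divide_right_mono_neg powr_mono2') auto
  with gcoef_minus_one_le[OF assms(1-3)] show ?thesis by linarith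
qed

lemma wcoef_1: "wcoef \<alpha> 1 = - (\<alpha> - 1) * (\<alpha> + 2) / 2"
  by (simp add: gcoef_def field_simps)

lemma wcoef_0_add_wcoef_2: "wcoef \<alpha> 0 + wcoef \<alpha> 2 = \<alpha> * (\<alpha> - 1) * (\<alpha> + 2) / 4"
  by (simp add: numeral_2_eq_2 gcoef_Suc field_simps)

lemma wcoef_nonneg:
  assumes "1 < \<alpha>" "\<alpha> < 2" "3 \<le> k"
  shows "wcoef \<alpha> k \<ge> 0"
proof -
  obtain j where "k = Suc j" "2 \<le> j" using assms(3) by (cases k) auto
  then show ?thesis
    using gcoef_pos[OF assms(1,2), of j] gcoef_pos[OF assms(1,2), of "Suc j"] assms by simp
qed

lemma sum_wcoef_atMost_le:
  assumes "1 < \<alpha>" "\<alpha> < 2" "2 \<le> m" "m < M"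
  shows "(\<Sum>k\<le>m. wcoef \<alpha> k) \<le> real M powr (-\<alpha>) / Gamma (1 - \<alpha>)"
proof -
  obtain j where j: "m = Suc j" "1 \<le> j" using assms(3) by (cases m) auto
  have "(\<Sum>k\<le>m. wcoef \<alpha> k) = \<alpha> / 2 * gcoef (\<alpha> - 1) m + (2 - \<alpha>) / 2 * gcoef (\<alpha> - 1) j"
    by (simp only: j sum_wcoef_atMost)
  also have "\<dots> \<le> \<alpha> / 2 * gcoef (\<alpha> - 1) m + (2 - \<alpha>) / 2 * gcoef (\<alpha> - 1) m"
    using gcoef_minus_one_mono[OF assms(1,2) j(2)] assms j by (intro add_left_mono mult_left_mono) auto
  also have "\<dots> = gcoef (\<alpha> - 1) m" by (simp add: field_simps)
  also have "\<dots> \<le> real M powr (-\<alpha>) / Gamma (1 - \<alpha>)"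
    using assms by (intro gcoef_minus_one_le_of_less) auto
  finally show ?thesis .
qed

lemma wcoef_1_le:
  assumes "1 < \<alpha>" "\<alpha> < 2" "2 \<le> M"
  shows "wcoef \<alpha> 1 \<le> real M powr (-\<alpha>) / Gamma (1 - \<alpha>)"
proof -
  have "wcoef \<alpha> 1 \<le> gcoef (\<alpha> - 1) 1"
    using assms by (simp add: wcoef_1 gcoef_def field_simps)
  also have "\<dots> \<le> real M powr (-\<alpha>) / Gamma (1 - \<alpha>)"
    using assms by (intro gcoef_minus_one_le_of_less) auto
  finally show ?thesis .
qed

lemma Amat_sym: "Amat \<alpha> i j = Amat \<alpha> j i"
  by (simp add: Amat_def add.commute)

lemma Amat_nonneg:
  assumes "1 < \<alpha>" "\<alpha> < 2" "i \<noteq> j"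
  shows "0 \<le> Amat \<alpha> i j"
proof -
  have "0 \<le> Amat \<alpha> i j" if "i < j" for i j
  proof (cases "j = i + 1")
    case True
    then have "Amat \<alpha> i j = wcoef \<alpha> 0 + wcoef \<alpha> 2"
      by (simp add: Amat_def Bmat_def del: wcoef.simps)
    also have "\<dots> = \<alpha> * (\<alpha> - 1) * (\<alpha> + 2) / 4" by (rule wcoef_0_add_wcoef_2)
    also have "\<dots> \<ge> 0" using assms by simp
    finally show ?thesis .
  next
    case False
    with that have "Amat \<alpha> i j = wcoef \<alpha> (j + 1 - i)" "3 \<le> j + 1 - i"
      by (auto simp: Amat_def Bmat_def)
    then show ?thesis using wcoef_nonneg[OF assms(1,2)] by simp
  qed
  with assms(3) show ?thesis by (metis Amat_sym nat_neq_iff)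
qed

lemma sum_Bmat_row_1: "(\<Sum>j=1..n. Bmat \<alpha> 1 j) = (\<Sum>k=1..n. wcoef \<alpha> k)"
  by (simp add: Bmat_def)

lemma sum_Bmat_row:
  assumes "2 \<le> i" "i \<le> n + 1"
  shows "(\<Sum>j=1..n. Bmat \<alpha> i j) = (\<Sum>k\<le>n + 1 - i. wcoef \<alpha> k)"
proof -
  have "(\<Sum>j=1..n. Bmat \<alpha> i j) = (if i \<le> n + 1 then (\<Sum>k\<le>n + 1 - i. wcoef \<alpha> k) else 0)" for n
  proof (induction n)
    case (Suc n)
    then show ?case using assms(1)
      by (cases "i \<le> n + 1"; cases "i = n + 2") (auto simp: Bmat_def Suc_diff_le)
  qed (use assms(1) in \<open>auto simp: Bmat_def\<close>)
  with assms(2) show ?thesis by simp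
qed

lemma sum_Bmat_col: "(\<Sum>j=1..n. Bmat \<alpha> j i) = (\<Sum>k=i+1-n..i. wcoef \<alpha> k)"
proof (induction n)
  case (Suc n)
  show ?case
  proof (cases "n \<le> i")
    case True
    then have "{i+1-Suc n..i} = insert (i - n) {i+1-n..i}" "i - n \<notin> {i+1-n..i}" by auto
    with Suc True show ?thesis by (simp add: Bmat_def Suc_diff_le)
  next
    case False
    with Suc show ?thesis by (simp add: Bmat_def)
  qed
qed simp

lemma sum_Amat_row_le:
  assumes "1 < \<alpha>" "\<alpha> < 2" "2 \<le> M" "1 \<le> i" "i \<le> M - 1"
  shows "(\<Sum>j=1..M-1. Amat \<alpha> i j) \<le> 2 * (real M powr (-\<alpha>) / Gamma (1 - \<alpha>))"
proof -
  define n where "n = M - 1"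
  define c where "c = real M powr (-\<alpha>) / Gamma (1 - \<alpha>)"
  define S where "S m = (\<Sum>k\<le>m. wcoef \<alpha> k)" for m
  have n: "2 \<le> n + 1" "n + 1 = M" "i \<le> n" using assms by (auto simp: n_def)
  have S_le: "S m \<le> c" if "2 \<le> m" "m \<le> n" for m
    unfolding S_def c_def using assms that n by (intro sum_wcoef_atMost_le) auto
  have w1_le: "wcoef \<alpha> 1 \<le> c"
    unfolding c_def using assms by (intro wcoef_1_le)
  have S_split: "S m = wcoef \<alpha> 0 + (\<Sum>k=1..m. wcoef \<alpha> k)" for m
    by (simp add: S_def atMost_atLeast0 sum.atLeast_Suc_atMost)
  have "(\<Sum>j=1..n. Amat \<alpha> i j) = (\<Sum>j=1..n. Bmat \<alpha> i j) + (\<Sum>j=1..n. Bmat \<alpha> j i)"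
    by (simp add: Amat_def sum.distrib)
  also have "\<dots> \<le> 2 * c"
  proof -
    consider "n = 1" | "2 \<le> n" "i = 1 \<or> i = n" | "2 \<le> i" "i < n"
      using assms(4) n by linarith
    then show ?thesis
    proof cases
      case 1
      with assms(4) n have "i = 1" by simp
      with 1 w1_le show ?thesis by (simp add: Bmat_def del: wcoef.simps)
    next
      case 2
      then have "(\<Sum>j=1..n. Bmat \<alpha> i j) + (\<Sum>j=1..n. Bmat \<alpha> j i) = (\<Sum>k=1..n. wcoef \<alpha> k) + S 1"
        using sum_Bmat_row_1[where n=n] sum_Bmat_row[where i=n and n=n]
          sum_Bmat_col[where i=1 and n=n] sum_Bmat_col[where i=n and n=n]
        by (auto simp: S_def atMost_atLeast0)
      then have "(\<Sum>j=1..n. Bmat \<alpha> i j) + (\<Sum>j=1..n. Bmat \<alpha> j i) = S n + wcoef \<alpha> 1"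
        by (simp add: S_split del: wcoef.simps)
      with 2 S_le[of n] w1_le show ?thesis by simp
    next
      case 3
      then have "(\<Sum>j=1..n. Bmat \<alpha> i j) + (\<Sum>j=1..n. Bmat \<alpha> j i) = S (n + 1 - i) + S i"
        using sum_Bmat_row[where i=i and n=n] sum_Bmat_col[where i=i and n=n]
        by (auto simp: S_def atMost_atLeast0)
      moreover have "S (n + 1 - i) \<le> c" using 3 by (intro S_le) auto
      ultimately show ?thesis using 3 S_le[of i] by simp
    qed
  qed
  finally show ?thesis by (simp add: n_def c_def)
qed

lemma Re_mult_cnj_le: "Re (y * cnj z) \<le> ((cmod y)\<^sup>2 + (cmod z)\<^sup>2) / 2"
proof -
  have "Re (y * cnj z) \<le> cmod y * cmod z"
    using complex_Re_le_cmod[of "y * cnj z"] by (simp add: norm_mult)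
  also have "\<dots> \<le> ((cmod y)\<^sup>2 + (cmod z)\<^sup>2) / 2"
    using sum_squares_ge_zero[of "cmod y - cmod z" 0] by (simp add: power2_eq_square algebra_simps)
  finally show ?thesis .
qed

lemma Im_quadratic_form_eq_0:
  fixes a :: "'i \<Rightarrow> 'i \<Rightarrow> real" and x :: "'i \<Rightarrow> complex"
  assumes sym: "\<And>i j. i \<in> I \<Longrightarrow> j \<in> I \<Longrightarrow> a i j = a j i"
  shows "Im (\<Sum>i\<in>I. (\<Sum>j\<in>I. complex_of_real (a i j) * x j) * cnj (x i)) = 0"
proof -
  define S where "S = (\<Sum>i\<in>I. \<Sum>j\<in>I. a i j * Im (x j * cnj (x i)))"
  have "S = (\<Sum>j\<in>I. \<Sum>i\<in>I. a i j * Im (x j * cnj (x i)))" unfolding S_def by (rule sum.swap)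
  also have "\<dots> = - S"
    unfolding S_def sum_negf[symmetric] using sym by (intro sum.cong refl) (simp add: algebra_simps)
  finally have "S = 0" by simp
  then show ?thesis by (simp add: S_def Im_sum sum_distrib_right mult.assoc)
qed

lemma Re_quadratic_form_le:
  fixes a :: "'i \<Rightarrow> 'i \<Rightarrow> real" and x :: "'i \<Rightarrow> complex"
  assumes sym: "\<And>i j. i \<in> I \<Longrightarrow> j \<in> I \<Longrightarrow> a i j = a j i"
    and off_diag: "\<And>i j. i \<in> I \<Longrightarrow> j \<in> I \<Longrightarrow> i \<noteq> j \<Longrightarrow> 0 \<le> a i j"
    and row_sum: "\<And>i. i \<in> I \<Longrightarrow> (\<Sum>j\<in>I. a i j) \<le> c"
  shows "Re (\<Sum>i\<in>I. (\<Sum>j\<in>I. complex_of_real (a i j) * x j) * cnj (x i)) \<le> c * (\<Sum>i\<in>I. (cmod (x i))\<^sup>2)"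
proof -
  have "Re (\<Sum>i\<in>I. (\<Sum>j\<in>I. complex_of_real (a i j) * x j) * cnj (x i))
      = (\<Sum>i\<in>I. \<Sum>j\<in>I. a i j * Re (x j * cnj (x i)))"
    by (simp add: Re_sum sum_distrib_right mult.assoc)
  also have "\<dots> \<le> (\<Sum>i\<in>I. \<Sum>j\<in>I. a i j * (((cmod (x i))\<^sup>2 + (cmod (x j))\<^sup>2) / 2))"
  proof (intro sum_mono)
    fix i j assume ij: "i \<in> I" "j \<in> I"
    show "a i j * Re (x j * cnj (x i)) \<le> a i j * (((cmod (x i))\<^sup>2 + (cmod (x j))\<^sup>2) / 2)"
    proof (cases "i = j")
      case True
      then show ?thesis by (simp add: cmod_power2 algebra_simps flip: power2_eq_square)
    next
      case False
      then show ?thesis using off_diag[OF ij False] Re_mult_cnj_le[of "x j" "x i"]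
        by (intro mult_left_mono) (auto simp: add.commute)
    qed
  qed
  also have "\<dots> = (\<Sum>i\<in>I. \<Sum>j\<in>I. a i j * (cmod (x i))\<^sup>2) / 2 + (\<Sum>i\<in>I. \<Sum>j\<in>I. a i j * (cmod (x j))\<^sup>2) / 2"
    by (simp add: sum_divide_distrib sum.distrib[symmetric] add_divide_distrib distrib_left)
  also have "(\<Sum>i\<in>I. \<Sum>j\<in>I. a i j * (cmod (x j))\<^sup>2) = (\<Sum>i\<in>I. \<Sum>j\<in>I. a i j * (cmod (x i))\<^sup>2)"
    using sym by (subst sum.swap) (auto intro: sum.cong)
  also have "(\<Sum>i\<in>I. \<Sum>j\<in>I. a i j * (cmod (x i))\<^sup>2) / 2 + (\<Sum>i\<in>I. \<Sum>j\<in>I. a i j * (cmod (x i))\<^sup>2) / 2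
      = (\<Sum>i\<in>I. (\<Sum>j\<in>I. a i j) * (cmod (x i))\<^sup>2)"
    by (simp add: sum_distrib_right)
  also have "\<dots> \<le> (\<Sum>i\<in>I. c * (cmod (x i))\<^sup>2)"
    using row_sum by (intro sum_mono mult_right_mono) auto
  finally show ?thesis by (simp add: sum_distrib_left)
qed

lemma norm_h_square:
  assumes "0 \<le> h"
  shows "(norm_h h M u)\<^sup>2 = h * (\<Sum>i=1..M-1. (cmod (u i))\<^sup>2)"
proof -
  have "(\<Sum>i=1..M-1. u i * cnj (u i)) = of_real (\<Sum>i=1..M-1. (cmod (u i))\<^sup>2)"
    unfolding of_real_sum by (simp add: complex_norm_square[symmetric])
  then show ?thesis using assms by (simp add: norm_h_def ip_h_def sum_nonneg)
qed

lemma ip_h_matvec: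
  "ip_h h M (matvec M C u) u
     = of_real h * (\<Sum>i=1..M-1. (\<Sum>j=1..M-1. complex_of_real (C i j) * u j) * cnj (u i))"
  by (simp add: ip_h_def matvec_def)

lemma Im_ip_h_matvec_Amat: "Im (ip_h h M (matvec M (Amat \<alpha>) u) u) = 0"
proof -
  have "Im (\<Sum>i=1..M-1. (\<Sum>j=1..M-1. complex_of_real (Amat \<alpha> i j) * u j) * cnj (u i)) = 0"
    by (rule Im_quadratic_form_eq_0) (rule Amat_sym)
  then show ?thesis by (simp add: ip_h_matvec)
qed

lemma Re_ip_h_matvec_Amat_le:
  assumes "1 < \<alpha>" "\<alpha> < 2" "2 \<le> M" "0 \<le> h"
  shows "Re (ip_h h M (matvec M (Amat \<alpha>) u) u)
           \<le> 2 * (real M powr (-\<alpha>) / Gamma (1 - \<alpha>)) * (norm_h h M u)\<^sup>2"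
proof -
  have "Re (\<Sum>i=1..M-1. (\<Sum>j=1..M-1. complex_of_real (Amat \<alpha> i j) * u j) * cnj (u i))
      \<le> 2 * (real M powr (-\<alpha>) / Gamma (1 - \<alpha>)) * (\<Sum>i=1..M-1. (cmod (u i))\<^sup>2)"
    using assms by (intro Re_quadratic_form_le Amat_sym Amat_nonneg sum_Amat_row_le) auto
  then have "h * Re (\<Sum>i=1..M-1. (\<Sum>j=1..M-1. complex_of_real (Amat \<alpha> i j) * u j) * cnj (u i))
      \<le> h * (2 * (real M powr (-\<alpha>) / Gamma (1 - \<alpha>)) * (\<Sum>i=1..M-1. (cmod (u i))\<^sup>2))"
    using assms(4) by (rule mult_left_mono)
  then show ?thesis unfolding ip_h_matvec norm_h_square[OF assms(4)] by (simp add: ac_simps)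
qed

theorem lemma3p5:
  fixes \<alpha> b h :: real and M :: nat and u :: "nat \<Rightarrow> complex"
  assumes "1 < \<alpha>" "\<alpha> < 2" "b > 0" "M \<ge> 2" "h = b / real M"
  shows "Im (ip_h h M (matvec M (Amat \<alpha>) u) u) = 0
       \<and> - (1 / h powr \<alpha>) * Re (ip_h h M (matvec M (Amat \<alpha>) u) u)
           \<ge> - (2 / (b powr \<alpha> * Gamma (1 - \<alpha>))) * (norm_h h M u)\<^sup>2
       \<and> ((\<exists>i\<in>{1..M-1}. u i \<noteq> 0) \<longrightarrow>
           - (2 / (b powr \<alpha> * Gamma (1 - \<alpha>))) * (norm_h h M u)\<^sup>2 > 0)"
proof -
  define K where "K = - (2 / (b powr \<alpha> * Gamma (1 - \<alpha>)))"
  have K: "K > 0"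
    using Gamma_neg_of_neg_one_lt[of "1 - \<alpha>"] assms by (simp add: K_def divide_neg_pos mult_pos_neg)
  have h: "h > 0" "h powr \<alpha> = b powr \<alpha> / real M powr \<alpha>"
    using assms by (auto simp: powr_divide)
  have "2 * (real M powr (-\<alpha>) / Gamma (1 - \<alpha>)) = - (K * h powr \<alpha>)"
    using h assms(3) by (simp add: K_def powr_minus_divide)
  then have "Re (ip_h h M (matvec M (Amat \<alpha>) u) u) \<le> - (K * h powr \<alpha>) * (norm_h h M u)\<^sup>2"
    using Re_ip_h_matvec_Amat_le[OF assms(1,2,4), of h u] h by simp
  then have "- (1 / h powr \<alpha>) * Re (ip_h h M (matvec M (Amat \<alpha>) u) u)
      \<ge> - (1 / h powr \<alpha>) * (- (K * h powr \<alpha>) * (norm_h h M u)\<^sup>2)"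
    by (rule mult_left_mono_neg) simp
  then have lower: "- (1 / h powr \<alpha>) * Re (ip_h h M (matvec M (Amat \<alpha>) u) u) \<ge> K * (norm_h h M u)\<^sup>2"
    using h(1) by simp
  have "K * (norm_h h M u)\<^sup>2 > 0" if "\<exists>i\<in>{1..M-1}. u i \<noteq> 0"
  proof -
    from that obtain i where i: "i \<in> {1..M-1}" "u i \<noteq> 0" by blast
    have "0 < (cmod (u i))\<^sup>2" using i by simp
    also have "\<dots> \<le> (\<Sum>i=1..M-1. (cmod (u i))\<^sup>2)" using i by (intro member_le_sum) auto
    finally show ?thesis using K h by (simp add: norm_h_square)
  qed
  with lower Im_ip_h_matvec_Amat show ?thesis unfolding K_def by blast
qed

end
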